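(* Consider the BSPR network with $K$ relays. For every nonempty $\mathcal M=\{m_1,\dots,m_M\}\subseteq\{1,\dots,K\}$, with $M=|\mathcal M|$, $p_{\max}=\max_{m\in\mathcal M}p_m$ and $q_{\max}=1-p_{\max}$, coded transmission with forwarding relays achieves every rate $R<R_\textnormal{coded,f}$, where $R_\textnormal{coded,f}=I(U;Y_1,\dots,Y_K)$ (with $U$ uniform) satisfies \[ R_\textnormal{coded,f}\ge 1+Mp_{\max}\log p_{\max}+Mq_{\max}\log q_{\max}-\sum_{l=0}^{M-1}\binom{M-1}{l}\left(q_{\max}^lp_{\max}^{M-l}+q_{\max}^{M-l}p_{\max}^l\right)\log\left(q_{\max}^lp_{\max}^{M-l}+q_{\max}^{M-l}p_{\max}^l\right). \]
   Context: Logarithms are base 2, with $0\log0=0$. BSPR network with $K$ relays: at each network use the source sends $U\in\{0,1\}$; relay $i$ receives $V_i=U\oplus Z_i$, $\Pr\{Z_i=1\}=p_{s,i}\in[0,1/2]$; relay $i$ sends $X_i$ and the destination receives $Y_i=X_i\oplus E_i$, $\Pr\{E_i=1\}=p_{i,d}\in[0,1/2]$; all noises mutually independent, i.i.d. over time. Codes: message $W$ uniform on $\{0,\dots,M'-1\}$; source encoder on $W$; relay $i$'s transmission at time $t$ depends only on its past received symbols; destination decodes from all its received symbols; $R$ is achievable if for every $\epsilon>0$ there are codes of rate at least $R$ with arbitrarily large length and average error probability at most $\epsilon$. A forwarding relay sets $X_i[t]=V_i[t-1]$ ($X_i[1]=0$), so the destination effectively receives $Y_i=U\oplus N_i$ with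 $N_i=Z_i\oplus E_i$ and $\Pr\{N_i=1\}=p_i:=p_{s,i}(1-p_{i,d})+(1-p_{s,i})p_{i,d}$. Coded transmission with forwarding relays: all relays forward and the source uses a channel code for the effective point-to-point channel from $U$ to $(Y_1,\dots,Y_K)$, the destination decoding from $(Y_1,\dots,Y_K)$. *)

theory Defs
  imports "HOL-Analysis.Analysis" "HOL-Library.FuncSet"
begin

definition xlogx :: "real \<Rightarrow> real" where
  "xlogx x = (if x = 0 then 0 else x * log 2 x)"

text \<open>End-to-end crossover probability of relay i with forwarding.\<close>
definition eff_p :: "(nat \<Rightarrow> real) \<Rightarrow> (nat \<Rightarrow> real) \<Rightarrow> nat \<Rightarrow> real" where
  "eff_p ps pd i = ps i * (1 - pd i) + (1 - ps i) * pd i"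

text \<open>Output alphabet of the effective channel: (Y_1,...,Y_K), relays indexed 1..K.\<close>
definition outs :: "nat \<Rightarrow> (nat \<Rightarrow> bool) set" where
  "outs K = {1..K} \<rightarrow>\<^sub>E (UNIV :: bool set)"

text \<open>Transition probability W(y|u) of the effective channel U -> (Y_1,...,Y_K),
  Y_i = U xor N_i with Pr{N_i = 1} = p i, independent.\<close>
definition chan :: "nat \<Rightarrow> (nat \<Rightarrow> real) \<Rightarrow> bool \<Rightarrow> (nat \<Rightarrow> bool) \<Rightarrow> real" where
  "chan K p u y = (\<Prod>i\<in>{1..K}. if y i = u then 1 - p i else p i)"

definition mutual_info_unif :: "nat \<Rightarrow> (nat \<Rightarrow> real) \<Rightarrow> real" where
  "mutual_info_unif K p =
     (\<Sum>u\<in>(UNIV::bool set). \<Sum>y\<in>outs K.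
        (if chan K p u y = 0 then 0
         else (1/2) * chan K p u y *
              log 2 (chan K p u y / ((chan K p False y + chan K p True y) / 2))))"

text \<open>Memoryless extension: blocklength n, codeword x indexed by times 0..n-1,
  output block y t = (Y_1[t],...,Y_K[t]).\<close>
definition chan_n :: "nat \<Rightarrow> (nat \<Rightarrow> real) \<Rightarrow> nat \<Rightarrow> (nat \<Rightarrow> bool) \<Rightarrow> (nat \<Rightarrow> nat \<Rightarrow> bool) \<Rightarrow> real" where
  "chan_n K p n x y = (\<Prod>t<n. chan K p (x t) (y t))"

definition outs_n :: "nat \<Rightarrow> nat \<Rightarrow> (nat \<Rightarrow> nat \<Rightarrow> bool) set" where
  "outs_n K n = {..<n} \<rightarrow>\<^sub>E outs K"

definition avg_err :: "nat \<Rightarrow> (nat \<Rightarrow> real) \<Rightarrow> nat \<Rightarrow> nat \<Rightarrow> (nat \<Rightarrow> nat \<Rightarrow> bool)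
      \<Rightarrow> ((nat \<Rightarrow> nat \<Rightarrow> bool) \<Rightarrow> nat) \<Rightarrow> real" where
  "avg_err K p n Mp enc dec =
     (1 / real Mp) * (\<Sum>w<Mp. \<Sum>y\<in>outs_n K n.
        (if dec y \<noteq> w then chan_n K p n (enc w) y else 0))"

definition achievable_fwd :: "nat \<Rightarrow> (nat \<Rightarrow> real) \<Rightarrow> real \<Rightarrow> bool" where
  "achievable_fwd K p R \<longleftrightarrow>
     (\<forall>\<epsilon>>0. \<forall>N. \<exists>n\<ge>N. \<exists>Mp enc dec. n > 0 \<and> Mp \<ge> 1 \<and>
        log 2 (real Mp) / real n \<ge> R \<and> avg_err K p n Mp enc dec \<le> \<epsilon>)"

end

theory Submission
  imports Defs
begin

text \<open>Raising the crossover probability of a relay amounts to passing its output through a further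
  binary symmetric channel, so by the data processing inequality (a consequence of the joint
  convexity of x log (x / y)) the mutual information can only decrease. Degrading every relay of M
  to crossover p_max and making all other relays useless (crossover 1/2) therefore gives a lower
  bound, and for that channel the output matters only through the number of ones among the relays
  of M, whence the binomial closed form.

  Achievability is the channel coding theorem for the effective binary-input memoryless channel,
  proved by random coding with a likelihood-ratio threshold decoder: a wrong codeword passes the
  threshold 2^(na) with probability at most 2^(-na) by Markov's inequality, and by a Chernoff bound
  the right one fails it with probability at most g(s)^n, where g(0) = 1 and
  g'(0) = ln 2 (a - I) < 0 when a < I.\<close>

section \<open>Log-sum inequality and data processing\<close>

definition kl_term :: "real \<Rightarrow> real \<Rightarrow> real" where
  "kl_term a b = (if a = 0 then 0 else a * log 2 (a / b))"

lemma kl_term_ge_tangent: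
  fixes a m t :: real
  assumes "a \<ge> 0" "m > 0" "t > 0"
  shows "a * log 2 t + (a - m * t) / ln 2 \<le> kl_term a m"
proof (cases "a = 0")
  case True
  then show ?thesis using assms by (simp add: kl_term_def)
next
  case False
  then have a: "a > 0" using assms by simp
  have "ln (m * t / a) \<le> m * t / a - 1"
    using a assms by (intro ln_le_minus_one) simp
  then have "a * (1 - m * t / a) \<le> a * ln (a / (m * t))"
    using a assms by (intro mult_left_mono) (simp_all add: ln_div)
  then have "a - m * t \<le> a * ln (a / m) - a * ln t"
    using a assms by (simp add: ln_div ln_mult algebra_simps)
  then have "(a - m * t) / ln 2 \<le> (a * ln (a / m) - a * ln t) / ln 2"
    by (intro divide_right_mono) simp_all
  then show ?thesis
    using False by (simp add: kl_term_def log_def diff_divide_distrib)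
qed

lemma kl_term_add_le:
  fixes a a' m m' :: real
  assumes "a \<ge> 0" "a' \<ge> 0" "m \<ge> 0" "m' \<ge> 0" "a > 0 \<Longrightarrow> m > 0" "a' > 0 \<Longrightarrow> m' > 0"
  shows "kl_term (a + a') (m + m') \<le> kl_term a m + kl_term a' m'"
proof (cases "m = 0 \<or> m' = 0 \<or> a + a' = 0")
  case True
  then show ?thesis using assms by (auto simp: kl_term_def)
next
  case False
  define t where "t = (a + a') / (m + m')"
  have pos: "m > 0" "m' > 0" "a + a' > 0" "t > 0"
    using False assms by (auto simp: t_def)
  have "kl_term (a + a') (m + m') = (a + a') * log 2 t + ((a + a') - (m + m') * t) / ln 2"
    using pos by (simp add: kl_term_def t_def)
  also have "\<dots> = (a * log 2 t + (a - m * t) / ln 2) + (a' * log 2 t + (a' - m' * t) / ln 2)"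
    by (simp add: algebra_simps add_divide_distrib diff_divide_distrib)
  also have "\<dots> \<le> kl_term a m + kl_term a' m'"
    using assms pos by (intro add_mono kl_term_ge_tangent) auto
  finally show ?thesis .
qed

lemma kl_term_scale: "t \<ge> 0 \<Longrightarrow> kl_term (t * a) (t * m) = t * kl_term a m"
  by (cases "t = 0") (auto simp: kl_term_def)

text \<open>mi_term (W False y) (W True y) is the contribution of the output y to I(U;Y) for uniform U.\<close>
definition mi_term :: "real \<Rightarrow> real \<Rightarrow> real" where
  "mi_term a b = (kl_term a ((a + b) / 2) + kl_term b ((a + b) / 2)) / 2"

lemma mi_term_scale: "t \<ge> 0 \<Longrightarrow> mi_term (t * a) (t * b) = t * mi_term a b"
  using kl_term_scale[of t a "(a + b) / 2"] kl_term_scale[of t b "(a + b) / 2"]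
  by (simp add: mi_term_def algebra_simps)

lemma mi_term_add_le:
  assumes "a \<ge> 0" "b \<ge> 0" "a' \<ge> 0" "b' \<ge> 0"
  shows "mi_term (a + a') (b + b') \<le> mi_term a b + mi_term a' b'"
proof -
  have mid: "(a + a' + (b + b')) / 2 = (a + b) / 2 + (a' + b') / 2"
    by (simp add: field_simps)
  have "kl_term (a + a') ((a + b) / 2 + (a' + b') / 2) \<le> kl_term a ((a + b) / 2) + kl_term a' ((a' + b') / 2)"
   and "kl_term (b + b') ((a + b) / 2 + (a' + b') / 2) \<le> kl_term b ((a + b) / 2) + kl_term b' ((a' + b') / 2)"
    using assms by (intro kl_term_add_le; simp)+
  then show ?thesis unfolding mi_term_def mid by argo
qed

lemma mi_term_sum_le:
  assumes "finite S" "\<And>x. x \<in> S \<Longrightarrow> f x \<ge> 0" "\<And>x. x \<in> S \<Longrightarrow> g x \<ge> 0"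
  shows "mi_term (\<Sum>x\<in>S. f x) (\<Sum>x\<in>S. g x) \<le> (\<Sum>x\<in>S. mi_term (f x) (g x))"
  using assms
proof (induction S rule: finite_induct)
  case empty
  then show ?case by (simp add: mi_term_def kl_term_def)
next
  case (insert x S)
  then have "mi_term (f x + sum f S) (g x + sum g S) \<le> mi_term (f x) (g x) + mi_term (sum f S) (sum g S)"
    by (intro mi_term_add_le sum_nonneg) auto
  with insert show ?case by simp
qed

lemma mi_term_eq_xlogx:
  assumes "a \<ge> 0" "b \<ge> 0"
  shows "mi_term a b = (xlogx a + xlogx b - xlogx (a + b) + a + b) / 2"
proof (cases "a + b = 0")
  case True
  then show ?thesis using assms by (simp add: mi_term_def kl_term_def xlogx_def)
next
  case False
  then have s: "a + b > 0" using assms by simp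
  have kl: "kl_term c ((a + b) / 2) = xlogx c - c * (log 2 (a + b) - 1)" if "c \<ge> 0" for c
  proof (cases "c = 0")
    case False
    then have "log 2 (c / ((a + b) / 2)) = log 2 c - (log 2 (a + b) - 1)"
      using that s by (simp add: log_divide log_mult)
    then show ?thesis using False by (simp add: kl_term_def xlogx_def right_diff_distrib)
  qed (simp add: kl_term_def xlogx_def)
  have "xlogx (a + b) = a * log 2 (a + b) + b * log 2 (a + b)"
    using s by (simp add: xlogx_def distrib_right)
  then show ?thesis unfolding mi_term_def kl[OF assms(1)] kl[OF assms(2)] by argo
qed

definition mutual_info_bin :: "(bool \<Rightarrow> 'y \<Rightarrow> real) \<Rightarrow> 'y set \<Rightarrow> real" where
  "mutual_info_bin W Y = (\<Sum>u\<in>(UNIV::bool set). \<Sum>y\<in>Y.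
        (if W u y = 0 then 0
         else (1/2) * W u y * log 2 (W u y / ((W False y + W True y) / 2))))"

lemma mutual_info_bin_eq_sum_mi_term:
  "mutual_info_bin W Y = (\<Sum>y\<in>Y. mi_term (W False y) (W True y))"
  unfolding mutual_info_bin_def
  by (subst sum.swap) (intro sum.cong refl, simp add: UNIV_bool mi_term_def kl_term_def)

lemma mutual_info_bin_data_processing:
  assumes "finite Y" "finite Z"
    and W_nonneg: "\<And>u y. y \<in> Y \<Longrightarrow> W u y \<ge> 0"
    and T_nonneg: "\<And>y z. y \<in> Y \<Longrightarrow> z \<in> Z \<Longrightarrow> T y z \<ge> 0"
    and T_stochastic: "\<And>y. y \<in> Y \<Longrightarrow> (\<Sum>z\<in>Z. T y z) = 1"
    and W'_eq: "\<And>u z. z \<in> Z \<Longrightarrow> W' u z = (\<Sum>y\<in>Y. T y z * W u y)"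
  shows "mutual_info_bin W' Z \<le> mutual_info_bin W Y"
proof -
  have "mutual_info_bin W' Z =
        (\<Sum>z\<in>Z. mi_term (\<Sum>y\<in>Y. T y z * W False y) (\<Sum>y\<in>Y. T y z * W True y))"
    unfolding mutual_info_bin_eq_sum_mi_term using W'_eq by (intro sum.cong) auto
  also have "\<dots> \<le> (\<Sum>z\<in>Z. \<Sum>y\<in>Y. mi_term (T y z * W False y) (T y z * W True y))"
    using assms by (intro sum_mono mi_term_sum_le) auto
  also have "\<dots> = (\<Sum>y\<in>Y. (\<Sum>z\<in>Z. T y z) * mi_term (W False y) (W True y))"
    using T_nonneg by (subst sum.swap) (simp add: mi_term_scale sum_distrib_right)
  also have "\<dots> = mutual_info_bin W Y"
    unfolding mutual_info_bin_eq_sum_mi_term using T_stochastic by simp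
  finally show ?thesis .
qed

section \<open>Degrading the relays\<close>

lemma mutual_info_unif_eq: "mutual_info_unif K p = mutual_info_bin (chan K p) (outs K)"
  unfolding mutual_info_unif_def mutual_info_bin_def ..

lemma finite_outs: "finite (outs K)"
  unfolding outs_def by (intro finite_PiE) auto

lemma sum_outs_prod:
  fixes f :: "nat \<Rightarrow> bool \<Rightarrow> 'a :: comm_semiring_1"
  shows "(\<Sum>y\<in>outs K. \<Prod>i\<in>{1..K}. f i (y i)) = (\<Prod>i\<in>{1..K}. f i False + f i True)"
  unfolding outs_def using prod_sum_PiE[of "{1..K}" "\<lambda>_. UNIV" f]
  by (simp add: UNIV_bool add.commute)

lemma chan_nonneg:
  assumes "\<forall>i\<in>{1..K}. 0 \<le> p i \<and> p i \<le> 1"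
  shows "chan K p u y \<ge> 0"
  unfolding chan_def using assms by (intro prod_nonneg) auto

lemma sum_chan_outs: "(\<Sum>y\<in>outs K. chan K p u y) = 1"
  unfolding chan_def
  using sum_outs_prod[where f="\<lambda>i b. if b = u then 1 - p i else p i"] by (cases u) simp_all

definition flip_kernel :: "nat \<Rightarrow> (nat \<Rightarrow> real) \<Rightarrow> (nat \<Rightarrow> bool) \<Rightarrow> (nat \<Rightarrow> bool) \<Rightarrow> real" where
  "flip_kernel K r y z = (\<Prod>i\<in>{1..K}. if z i = y i then 1 - r i else r i)"

lemma sum_flip_kernel: "(\<Sum>z\<in>outs K. flip_kernel K r y z) = 1"
  unfolding flip_kernel_def
  using sum_outs_prod[where f="\<lambda>i b. if b = y i then 1 - r i else r i"]
  by (simp add: prod.neutral if_distrib cong: if_cong)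

lemma chan_flip_compose:
  "chan K (\<lambda>i. p i + r i - 2 * p i * r i) u z = (\<Sum>y\<in>outs K. flip_kernel K r y z * chan K p u y)"
proof -
  have "(\<Sum>y\<in>outs K. flip_kernel K r y z * chan K p u y) =
        (\<Sum>y\<in>outs K. \<Prod>i\<in>{1..K}. (if z i = y i then 1 - r i else r i) * (if y i = u then 1 - p i else p i))"
    unfolding flip_kernel_def chan_def by (simp add: prod.distrib)
  also have "\<dots> = chan K (\<lambda>i. p i + r i - 2 * p i * r i) u z"
    using sum_outs_prod[where f="\<lambda>i b. (if z i = b then 1 - r i else r i) * (if b = u then 1 - p i else p i)"]
    unfolding chan_def by (auto intro!: prod.cong simp: algebra_simps)
  finally show ?thesis ..
qed

text \<open>A relay with crossover probability p' i is one with crossover probability p i followed by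
  an independent flip with probability r i = (p' i - p i) / (1 - 2 p i).\<close>
lemma mutual_info_chan_antimono:
  assumes "\<forall>i\<in>{1..K}. 0 \<le> p i \<and> p i \<le> p' i \<and> p' i \<le> 1/2"
  shows "mutual_info_bin (chan K p') (outs K) \<le> mutual_info_bin (chan K p) (outs K)"
proof -
  define r where "r i = (if p i = 1/2 then 0 else (p' i - p i) / (1 - 2 * p i))" for i
  have r: "0 \<le> r i \<and> r i \<le> 1 \<and> p' i = p i + r i - 2 * p i * r i" if "i \<in> {1..K}" for i
  proof (cases "p i = 1/2")
    case False
    have "p i \<le> p' i" "p' i \<le> 1/2" using assms that by auto
    with False have pos: "1 - 2 * p i > 0" by linarith
    then have "r i * (1 - 2 * p i) = p' i - p i" using False by (simp add: r_def)
    then have "p' i = p i + r i - 2 * p i * r i" by (simp add: algebra_simps)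
    moreover have "p' i - p i \<le> 1 - 2 * p i" using \<open>p i \<le> p' i\<close> \<open>p' i \<le> 1/2\<close> by linarith
    ultimately show ?thesis
      using pos \<open>p i \<le> p' i\<close> False by (simp add: r_def divide_le_eq)
  next
    case True
    moreover have "p i \<le> p' i" "p' i \<le> 1/2" using assms that by auto
    ultimately show ?thesis by (simp add: r_def)
  qed
  have "chan K p' u z = chan K (\<lambda>i. p i + r i - 2 * p i * r i) u z" for u z
    unfolding chan_def using r by (intro prod.cong) auto
  then show ?thesis
  proof (intro mutual_info_bin_data_processing[OF finite_outs finite_outs, where T = "flip_kernel K r"])
    show "0 \<le> chan K p u y" for u y
      using assms by (intro chan_nonneg) auto
    show "0 \<le> flip_kernel K r y z" for y z
      unfolding flip_kernel_def using r by (intro prod_nonneg) auto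
  qed (simp_all add: sum_flip_kernel chan_flip_compose)
qed

section \<open>The comparison channel\<close>

lemma xlogx_mult: "a \<ge> 0 \<Longrightarrow> b \<ge> 0 \<Longrightarrow> xlogx (a * b) = a * xlogx b + b * xlogx a"
  by (cases "a = 0"; cases "b = 0") (auto simp: xlogx_def log_mult algebra_simps)

lemma xlogx_power: "x \<ge> 0 \<Longrightarrow> xlogx (x ^ k) = real k * x ^ (k - 1) * xlogx x"
proof (cases "x = 0")
  case False
  moreover assume "x \<ge> 0"
  ultimately have "log 2 (x ^ k) = real k * log 2 x" by (simp add: log_nat_power)
  with False show ?thesis by (cases k) (simp_all add: xlogx_def)
qed (cases k; simp add: xlogx_def)

lemma binomial_deriv1_rev:
  "(\<Sum>k\<le>m. real (m choose k) * x ^ k * (real (m - k) * y ^ (m - k - 1))) = real m * (x + y) ^ (m - 1)"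
proof -
  have "(\<Sum>k\<le>m. real (m choose k) * x ^ k * (real (m - k) * y ^ (m - k - 1))) =
        (\<Sum>k\<le>m. (real k * real (m choose k)) * y ^ (k - 1) * x ^ (m - k))"
    unfolding atMost_atLeast0
    by (subst sum.atLeastAtMost_rev) (intro sum.cong refl, auto simp: binomial_symmetric[symmetric])
  also have "\<dots> = real m * (x + y) ^ (m - 1)"
    using binomial_deriv1[of m y x] by (simp add: add.commute)
  finally show ?thesis .
qed

lemma sum_binomial_xlogx:
  fixes x y :: real
  assumes "x \<ge> 0" "y \<ge> 0"
  shows "(\<Sum>k\<le>m. real (m choose k) * xlogx (x ^ k * y ^ (m - k))) =
         real m * (x + y) ^ (m - 1) * (xlogx x + xlogx y)"
proof -
  have "real (m choose k) * xlogx (x ^ k * y ^ (m - k)) =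
        (real k * real (m choose k)) * x ^ (k - 1) * y ^ (m - k) * xlogx x +
        real (m choose k) * x ^ k * (real (m - k) * y ^ (m - k - 1)) * xlogx y" for k
    using assms by (simp only: xlogx_mult xlogx_power zero_le_power) (simp only: algebra_simps)
  then have "(\<Sum>k\<le>m. real (m choose k) * xlogx (x ^ k * y ^ (m - k))) =
        (\<Sum>k\<le>m. (real k * real (m choose k)) * x ^ (k - 1) * y ^ (m - k)) * xlogx x +
        (\<Sum>k\<le>m. real (m choose k) * x ^ k * (real (m - k) * y ^ (m - k - 1))) * xlogx y"
    by (simp only: sum.distrib sum_distrib_right)
  also have "\<dots> = real m * (x + y) ^ (m - 1) * (xlogx x + xlogx y)"
    by (simp only: binomial_deriv1 binomial_deriv1_rev distrib_left)
  finally show ?thesis .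
qed

lemma sum_Pow_card:
  assumes "finite M"
  shows "(\<Sum>T\<in>Pow M. (G (card T) :: real)) = (\<Sum>k\<le>card M. real (card M choose k) * G k)"
proof -
  have "(\<Sum>T\<in>Pow M. G (card T)) = (\<Sum>k\<in>{..card M}. \<Sum>T\<in>{T. T \<in> Pow M \<and> card T = k}. G (card T))"
    using assms by (intro sum.group[symmetric]) (auto intro: card_mono)
  also have "\<dots> = (\<Sum>k\<le>card M. \<Sum>T\<in>{T. T \<subseteq> M \<and> card T = k}. G k)"
    by (intro sum.cong) auto
  also have "\<dots> = (\<Sum>k\<le>card M. real (card M choose k) * G k)"
    using n_subsets[OF assms] by simp
  finally show ?thesis .
qed

lemma sum_outs_card_filter:
  assumes "M \<subseteq> {1..K}"
  shows "(\<Sum>z\<in>outs K. (G (card {i\<in>M. z i}) :: real)) =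
         2 ^ (K - card M) * (\<Sum>k\<le>card M. real (card M choose k) * G k)"
proof -
  have fM: "finite M" using assms finite_subset by blast
  have "(\<Sum>z\<in>outs K. G (card {i\<in>M. z i})) = (\<Sum>(T, U)\<in>Pow M \<times> Pow ({1..K} - M). G (card T))"
    using assms
    by (intro sum.reindex_bij_witness[of _ "\<lambda>(T, U) i. if i \<in> {1..K} then i \<in> T \<union> U else undefined"
          "\<lambda>z. ({i\<in>M. z i}, {i\<in>{1..K} - M. z i})"])
       (auto simp: outs_def PiE_def extensional_def)
  also have "\<dots> = 2 ^ card ({1..K} - M) * (\<Sum>T\<in>Pow M. G (card T))"
    by (simp add: sum.cartesian_product[symmetric] card_Pow sum_distrib_left)
  also have "card ({1..K} - M) = K - card M"
    using assms fM by (simp add: card_Diff_subset)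
  finally show ?thesis by (simp add: sum_Pow_card[OF fM])
qed

lemma sum_binomial_Suc_symmetric:
  fixes h :: "nat \<Rightarrow> real"
  assumes sym: "\<And>k. k \<le> Suc n \<Longrightarrow> h (Suc n - k) = h k"
  shows "(\<Sum>k\<le>Suc n. real (Suc n choose k) * h k) = 2 * (\<Sum>k\<le>n. real (n choose k) * h k)"
proof -
  have "(\<Sum>k\<le>Suc n. real (Suc n choose k) * h k) =
        (\<Sum>k\<le>n. real (n choose k) * h (Suc k)) + (h 0 + (\<Sum>k\<le>n. real (n choose Suc k) * h (Suc k)))"
    by (subst sum.atMost_Suc_shift) (simp add: sum.distrib algebra_simps)
  also have "h 0 + (\<Sum>k\<le>n. real (n choose Suc k) * h (Suc k)) = (\<Sum>k\<le>Suc n. real (n choose k) * h k)"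
    by (subst sum.atMost_Suc_shift[of _ n]) simp
  also have "\<dots> = (\<Sum>k\<le>n. real (n choose k) * h k)"
    by simp
  also have "(\<Sum>k\<le>n. real (n choose k) * h (Suc k)) = (\<Sum>k\<le>n. real (n choose k) * h k)"
    unfolding atMost_atLeast0
  proof (subst sum.atLeastAtMost_rev, intro sum.cong refl)
    fix k assume "k \<in> {0..n}"
    then show "real (n choose (n + 0 - k)) * h (Suc (n + 0 - k)) = real (n choose k) * h k"
      using sym[of k] by (simp add: binomial_symmetric[symmetric] Suc_diff_le)
  qed
  finally show ?thesis by simp
qed

text \<open>In the comparison channel the relays of M have crossover pm and the others carry no
  information.\<close>
lemma chan_restricted:
  fixes z :: "nat \<Rightarrow> bool"
  assumes "M \<subseteq> {1..K}"
  defines "k \<equiv> card {i\<in>M. z i}"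
  shows "chan K (\<lambda>i. if i \<in> M then pm else 1/2) u z = (1/2) ^ (K - card M) *
           (if u then (1 - pm) ^ k * pm ^ (card M - k) else pm ^ k * (1 - pm) ^ (card M - k))"
proof -
  have fM: "finite M" using assms finite_subset by blast
  have card_not: "card {i\<in>M. \<not> z i} = card M - k"
  proof -
    have "{i\<in>M. \<not> z i} = M - {i\<in>M. z i}" by auto
    then show ?thesis using fM by (simp add: k_def card_Diff_subset)
  qed
  define f where "f i = (if z i = u then 1 - (if i \<in> M then pm else 1/2) else (if i \<in> M then pm else 1/2))"
    for i :: nat
  have "chan K (\<lambda>i. if i \<in> M then pm else 1/2) u z = prod f ({1..K} - M) * prod f M"
    unfolding chan_def f_def using assms by (intro prod.subset_diff) auto
  also have "prod f ({1..K} - M) = (\<Prod>i\<in>{1..K} - M. 1/2)"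
    by (intro prod.cong) (auto simp: f_def)
  also have "\<dots> = (1/2) ^ (K - card M)"
    using assms fM by (simp add: card_Diff_subset)
  also have "prod f M = (\<Prod>i\<in>M. if z i = u then 1 - pm else pm)"
    by (intro prod.cong) (auto simp: f_def)
  also have "(\<Prod>i\<in>M. if z i = u then 1 - pm else pm) =
             (1 - pm) ^ card {i\<in>M. z i = u} * pm ^ card {i\<in>M. z i \<noteq> u}"
    using fM by (simp add: prod.If_cases Int_def)
  finally show ?thesis
    using card_not by (cases u) (simp_all add: k_def mult.commute)
qed

lemma mutual_info_chan_restricted:
  assumes M: "M \<subseteq> {1..K}" "card M = Suc n" and pm: "0 \<le> pm" "pm \<le> 1"
  shows "mutual_info_bin (chan K (\<lambda>i. if i \<in> M then pm else 1/2)) (outs K) =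
     1 + real (Suc n) * xlogx pm + real (Suc n) * xlogx (1 - pm)
       - (\<Sum>l=0..n. real (n choose l) *
                 xlogx ((1 - pm) ^ l * pm ^ (Suc n - l) + (1 - pm) ^ (Suc n - l) * pm ^ l))"
proof -
  define m where "m = Suc n"
  define q where "q = 1 - pm"
  have q: "q \<ge> 0" "pm + q = 1" using pm by (auto simp: q_def)
  define a where "a k = pm ^ k * q ^ (m - k)" for k
  define b where "b k = q ^ k * pm ^ (m - k)" for k
  have ab: "a k \<ge> 0" "b k \<ge> 0" for k using q pm by (simp_all add: a_def b_def)
  define c :: real where "c = (1/2) ^ (K - m)"
  have "mutual_info_bin (chan K (\<lambda>i. if i \<in> M then pm else 1/2)) (outs K) =
        (\<Sum>z\<in>outs K. c * mi_term (a (card {i\<in>M. z i})) (b (card {i\<in>M. z i})))"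
    unfolding mutual_info_bin_eq_sum_mi_term chan_restricted[OF M(1)]
    by (intro sum.cong refl) (simp add: mi_term_scale c_def a_def b_def m_def q_def M(2))
  also have "\<dots> = 2 ^ (K - m) * (\<Sum>k\<le>m. real (m choose k) * (c * mi_term (a k) (b k)))"
    using sum_outs_card_filter[OF M(1), of "\<lambda>k. c * mi_term (a k) (b k)"] by (simp add: M(2) m_def)
  also have "\<dots> = (2 ^ (K - m) * c) * (\<Sum>k\<le>m. real (m choose k) * mi_term (a k) (b k))"
    by (simp add: sum_distrib_left mult_ac)
  also have "\<dots> = (\<Sum>k\<le>m. real (m choose k) * mi_term (a k) (b k))"
    by (simp add: c_def power_mult_distrib[symmetric])
  also have "\<dots> = ((\<Sum>k\<le>m. real (m choose k) * xlogx (a k)) + (\<Sum>k\<le>m. real (m choose k) * xlogx (b k))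
                   - (\<Sum>k\<le>m. real (m choose k) * xlogx (a k + b k))
                   + (\<Sum>k\<le>m. real (m choose k) * a k) + (\<Sum>k\<le>m. real (m choose k) * b k)) / 2"
  proof -
    have "real (m choose k) * mi_term (a k) (b k) =
          (real (m choose k) * xlogx (a k) + real (m choose k) * xlogx (b k)
           - real (m choose k) * xlogx (a k + b k)
           + real (m choose k) * a k + real (m choose k) * b k) / 2" for k
      using ab by (simp add: mi_term_eq_xlogx algebra_simps)
    then show ?thesis by (simp only: sum_divide_distrib[symmetric] sum.distrib sum_subtractf)
  qed
  also have "(\<Sum>k\<le>m. real (m choose k) * xlogx (a k)) = real m * (xlogx pm + xlogx q)"
    using sum_binomial_xlogx[of pm q m] q pm by (simp add: a_def)
  also have "(\<Sum>k\<le>m. real (m choose k) * xlogx (b k)) = real m * (xlogx pm + xlogx q)"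
    using sum_binomial_xlogx[of q pm m] q pm by (simp add: b_def add.commute)
  also have "(\<Sum>k\<le>m. real (m choose k) * a k) = 1"
    using binomial_ring[of pm q m] q by (simp add: a_def mult_ac)
  also have "(\<Sum>k\<le>m. real (m choose k) * b k) = 1"
    using binomial_ring[of q pm m] q by (simp add: b_def mult_ac add.commute)
  also have "(\<Sum>k\<le>m. real (m choose k) * xlogx (a k + b k)) =
             2 * (\<Sum>k\<le>n. real (n choose k) * xlogx (a k + b k))"
    unfolding m_def by (rule sum_binomial_Suc_symmetric) (simp add: a_def b_def m_def add.commute mult.commute)
  also have "(\<Sum>k\<le>n. real (n choose k) * xlogx (a k + b k)) =
             (\<Sum>l=0..n. real (n choose l) * xlogx ((1 - pm) ^ l * pm ^ (Suc n - l) + (1 - pm) ^ (Suc n - l) * pm ^ l))"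
    unfolding atMost_atLeast0 by (intro sum.cong refl) (simp add: a_def b_def q_def m_def algebra_simps)
  finally show ?thesis by (simp add: m_def q_def algebra_simps)
qed

section \<open>Random coding with threshold decoding\<close>

lemma sum_PiE_remove:
  assumes "w \<in> A"
  shows "(\<Sum>c\<in>A \<rightarrow>\<^sub>E X. h c) = (\<Sum>x\<in>X. \<Sum>c\<in>(A - {w}) \<rightarrow>\<^sub>E X. h (c(w := x)))"
proof -
  have "(\<Sum>c\<in>A \<rightarrow>\<^sub>E X. h c) = (\<Sum>(x, c)\<in>X \<times> ((A - {w}) \<rightarrow>\<^sub>E X). h (c(w := x)))"
    using assms
    by (intro sum.reindex_bij_witness[of _ "\<lambda>(x, c). c(w := x)" "\<lambda>c. (c w, c(w := undefined))"])
       (auto simp: PiE_def extensional_def Pi_def)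
  then show ?thesis by (simp add: sum.cartesian_product)
qed

lemma sum_PiE_coord:
  assumes "finite A" "finite X" "w \<in> A"
  shows "(\<Sum>c\<in>A \<rightarrow>\<^sub>E X. (f (c w) :: real)) = real (card X) ^ (card A - 1) * (\<Sum>x\<in>X. f x)"
  using assms by (simp add: sum_PiE_remove[OF assms(3)] card_PiE sum_distrib_right mult.commute)

lemma sum_PiE_two_coords:
  assumes "finite A" "finite X" "w \<in> A" "w' \<in> A" "w \<noteq> w'"
  shows "(\<Sum>c\<in>A \<rightarrow>\<^sub>E X. (g (c w) (c w') :: real)) =
         real (card X) ^ (card A - 2) * (\<Sum>x\<in>X. \<Sum>x'\<in>X. g x x')"
proof -
  have "(\<Sum>c\<in>A \<rightarrow>\<^sub>E X. g (c w) (c w')) = (\<Sum>x\<in>X. \<Sum>c\<in>(A - {w}) \<rightarrow>\<^sub>E X. g x (c w'))"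
    using assms by (simp add: sum_PiE_remove[OF assms(3)])
  also have "\<dots> = (\<Sum>x\<in>X. real (card X) ^ (card (A - {w}) - 1) * (\<Sum>x'\<in>X. g x x'))"
    using assms by (intro sum.cong refl sum_PiE_coord) auto
  also have "card (A - {w}) - 1 = card A - 2"
    using assms by simp
  finally show ?thesis by (simp add: sum_distrib_left)
qed

lemma exists_le_average:
  fixes f :: "'a \<Rightarrow> real"
  assumes "finite S" "S \<noteq> {}" "(\<Sum>c\<in>S. f c) \<le> real (card S) * b"
  shows "\<exists>c\<in>S. f c \<le> b"
proof (rule ccontr)
  assume "\<not> ?thesis"
  then have "(\<Sum>c\<in>S. b) < (\<Sum>c\<in>S. f c)"
    using assms by (intro sum_strict_mono) auto
  with assms show False by simp
qed

definition decode_first :: "nat \<Rightarrow> ('x \<Rightarrow> 'y \<Rightarrow> bool) \<Rightarrow> (nat \<Rightarrow> 'x) \<Rightarrow> 'y \<Rightarrow> nat" where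
  "decode_first Mp G c y = (if \<exists>w<Mp. G (c w) y then LEAST w. w < Mp \<and> G (c w) y else 0)"

definition code_error :: "('x \<Rightarrow> 'y \<Rightarrow> real) \<Rightarrow> 'y set \<Rightarrow> nat \<Rightarrow> (nat \<Rightarrow> 'x) \<Rightarrow> ('y \<Rightarrow> nat) \<Rightarrow> real" where
  "code_error V Y Mp c dec = (1 / real Mp) * (\<Sum>w<Mp. \<Sum>y\<in>Y. if dec y \<noteq> w then V (c w) y else 0)"

text \<open>Message w is decoded wrongly only if its own codeword fails the test G or some other
  codeword passes it.\<close>
lemma decode_first_error_le:
  fixes V :: "'x \<Rightarrow> 'y \<Rightarrow> real"
  assumes V: "\<And>y. y \<in> Y \<Longrightarrow> V (c w) y \<ge> 0" and w: "w < Mp"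
  shows "(\<Sum>y\<in>Y. if decode_first Mp G c y \<noteq> w then V (c w) y else 0) \<le>
         (\<Sum>y\<in>Y. if G (c w) y then 0 else V (c w) y) +
         (\<Sum>w'\<in>{..<Mp} - {w}. \<Sum>y\<in>Y. if G (c w') y then V (c w) y else 0)"
proof -
  have "(if decode_first Mp G c y \<noteq> w then V (c w) y else 0) \<le>
        (if G (c w) y then 0 else V (c w) y) +
        (\<Sum>w'\<in>{..<Mp} - {w}. if G (c w') y then V (c w) y else 0)" if y: "y \<in> Y" for y
  proof (cases "decode_first Mp G c y \<noteq> w \<and> G (c w) y")
    case True
    define w0 where "w0 = (LEAST w. w < Mp \<and> G (c w) y)"
    have ex: "\<exists>w<Mp. G (c w) y" using True w by auto
    then have "w0 < Mp \<and> G (c w0) y"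
      unfolding w0_def by (rule LeastI_ex)
    moreover have "decode_first Mp G c y = w0"
      using ex by (simp add: decode_first_def w0_def)
    ultimately have "w0 \<in> {..<Mp} - {w}" "G (c w0) y" using True by auto
    then have "V (c w) y \<le> (\<Sum>w'\<in>{..<Mp} - {w}. if G (c w') y then V (c w) y else 0)"
      using V[OF y] member_le_sum[of w0 "{..<Mp} - {w}" "\<lambda>w'. if G (c w') y then V (c w) y else 0"]
      by auto
    with True show ?thesis by simp
  next
    case False
    moreover have "0 \<le> (\<Sum>w'\<in>{..<Mp} - {w}. if G (c w') y then V (c w) y else 0)"
      using V[OF y] by (intro sum_nonneg) auto
    ultimately show ?thesis using V[OF y] by auto
  qed
  then have "(\<Sum>y\<in>Y. if decode_first Mp G c y \<noteq> w then V (c w) y else 0) \<le>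
        (\<Sum>y\<in>Y. (if G (c w) y then 0 else V (c w) y) +
                 (\<Sum>w'\<in>{..<Mp} - {w}. if G (c w') y then V (c w) y else 0))"
    by (rule sum_mono)
  also have "\<dots> = (\<Sum>y\<in>Y. if G (c w) y then 0 else V (c w) y) +
         (\<Sum>w'\<in>{..<Mp} - {w}. \<Sum>y\<in>Y. if G (c w') y then V (c w) y else 0)"
    by (simp add: sum.distrib sum.swap[of _ Y])
  finally show ?thesis .
qed

lemma sum_codebooks_code_error_le:
  fixes V :: "'x \<Rightarrow> 'y \<Rightarrow> real" and G :: "'x \<Rightarrow> 'y \<Rightarrow> bool"
  assumes "finite X" and V: "\<And>x y. x \<in> X \<Longrightarrow> y \<in> Y \<Longrightarrow> V x y \<ge> 0" and "Mp \<ge> 1"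
  defines "miss \<equiv> (\<Sum>x\<in>X. \<Sum>y\<in>Y. if G x y then 0 else V x y)"
    and "false_alarm \<equiv> (\<Sum>x\<in>X. \<Sum>x'\<in>X. \<Sum>y\<in>Y. if G x' y then V x y else 0)"
  shows "(\<Sum>c\<in>{..<Mp} \<rightarrow>\<^sub>E X. code_error V Y Mp c (decode_first Mp G c)) \<le>
           real (card X) ^ (Mp - 1) * miss + real (Mp - 1) * real (card X) ^ (Mp - 2) * false_alarm"
proof -
  define Cs where "Cs = {..<Mp} \<rightarrow>\<^sub>E X"
  define N where "N = real (card X)"
  have miss: "(\<Sum>c\<in>Cs. \<Sum>y\<in>Y. if G (c w) y then 0 else V (c w) y) = N ^ (Mp - 1) * miss"
    if "w < Mp" for w
    unfolding Cs_def N_def miss_def using \<open>finite X\<close> that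
    by (subst sum_PiE_coord[where f = "\<lambda>x. \<Sum>y\<in>Y. if G x y then 0 else V x y"]) auto
  have fa: "(\<Sum>c\<in>Cs. \<Sum>y\<in>Y. if G (c w') y then V (c w) y else 0) = N ^ (Mp - 2) * false_alarm"
    if "w < Mp" "w' \<in> {..<Mp} - {w}" for w w'
    unfolding Cs_def N_def false_alarm_def using \<open>finite X\<close> that
    by (subst sum_PiE_two_coords[where g = "\<lambda>x x'. \<Sum>y\<in>Y. if G x' y then V x y else 0"]) auto
  have "(\<Sum>c\<in>Cs. real Mp * code_error V Y Mp c (decode_first Mp G c)) \<le>
        (\<Sum>c\<in>Cs. \<Sum>w<Mp. (\<Sum>y\<in>Y. if G (c w) y then 0 else V (c w) y) +
           (\<Sum>w'\<in>{..<Mp} - {w}. \<Sum>y\<in>Y. if G (c w') y then V (c w) y else 0))"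
  proof (rule sum_mono)
    fix c assume "c \<in> Cs"
    then have "c w \<in> X" if "w < Mp" for w using that by (auto simp: Cs_def)
    then show "real Mp * code_error V Y Mp c (decode_first Mp G c) \<le>
        (\<Sum>w<Mp. (\<Sum>y\<in>Y. if G (c w) y then 0 else V (c w) y) +
           (\<Sum>w'\<in>{..<Mp} - {w}. \<Sum>y\<in>Y. if G (c w') y then V (c w) y else 0))"
      using \<open>Mp \<ge> 1\<close> V unfolding code_error_def by (auto intro!: sum_mono decode_first_error_le)
  qed
  also have "\<dots> = (\<Sum>w<Mp. (\<Sum>c\<in>Cs. \<Sum>y\<in>Y. if G (c w) y then 0 else V (c w) y) +
           (\<Sum>w'\<in>{..<Mp} - {w}. \<Sum>c\<in>Cs. \<Sum>y\<in>Y. if G (c w') y then V (c w) y else 0))"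
    by (subst sum.swap) (simp only: sum.distrib sum.swap[of _ Cs "{..<Mp} - {_}"])
  also have "\<dots> = real Mp * (N ^ (Mp - 1) * miss + real (Mp - 1) * N ^ (Mp - 2) * false_alarm)"
    using \<open>Mp \<ge> 1\<close> by (simp add: miss fa)
  finally show ?thesis
    using \<open>Mp \<ge> 1\<close> by (simp add: Cs_def N_def sum_distrib_left[symmetric])
qed

lemma exists_good_codebook:
  fixes V :: "'x \<Rightarrow> 'y \<Rightarrow> real" and G :: "'x \<Rightarrow> 'y \<Rightarrow> bool"
  assumes X: "finite X" "X \<noteq> {}"
    and V: "\<And>x y. x \<in> X \<Longrightarrow> y \<in> Y \<Longrightarrow> V x y \<ge> 0" and Mp: "Mp \<ge> 1"
  defines "miss \<equiv> (\<Sum>x\<in>X. \<Sum>y\<in>Y. if G x y then 0 else V x y)"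
    and "false_alarm \<equiv> (\<Sum>x\<in>X. \<Sum>x'\<in>X. \<Sum>y\<in>Y. if G x' y then V x y else 0)"
  shows "\<exists>c\<in>{..<Mp} \<rightarrow>\<^sub>E X. code_error V Y Mp c (decode_first Mp G c) \<le>
           miss / card X + real Mp * false_alarm / card X ^ 2"
proof -
  define N where "N = real (card X)"
  have N: "N > 0" using X by (simp add: N_def card_gt_0_iff)
  have fa_nonneg: "false_alarm \<ge> 0"
    unfolding false_alarm_def using V by (intro sum_nonneg) auto
  have "N ^ (Mp - 1) * miss = N ^ Mp * (miss / N)"
    using N Mp by (cases Mp) (auto simp: field_simps)
  moreover have "real (Mp - 1) * N ^ (Mp - 2) * false_alarm \<le> N ^ Mp * (real Mp * false_alarm / N ^ 2)"
  proof (cases "Mp = 1")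
    case False
    then have "Mp = (Mp - 2) + 2" using Mp by simp
    then have "N ^ Mp = N ^ (Mp - 2) * N ^ 2" by (metis power_add)
    then show ?thesis
      using N fa_nonneg by (simp add: mult_right_mono)
  qed (use N fa_nonneg in simp)
  ultimately have "N ^ (Mp - 1) * miss + real (Mp - 1) * N ^ (Mp - 2) * false_alarm \<le>
                   N ^ Mp * (miss / N + real Mp * false_alarm / N ^ 2)"
    unfolding distrib_left by linarith
  moreover have "(\<Sum>c\<in>{..<Mp} \<rightarrow>\<^sub>E X. code_error V Y Mp c (decode_first Mp G c)) \<le>
                 N ^ (Mp - 1) * miss + real (Mp - 1) * N ^ (Mp - 2) * false_alarm"
    unfolding miss_def false_alarm_def N_def by (rule sum_codebooks_code_error_le) (use assms in auto)
  ultimately have "(\<Sum>c\<in>{..<Mp} \<rightarrow>\<^sub>E X. code_error V Y Mp c (decode_first Mp G c)) \<le>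
                   real (card ({..<Mp} \<rightarrow>\<^sub>E X)) * (miss / N + real Mp * false_alarm / N ^ 2)"
    by (simp add: card_PiE X N_def)
  then show ?thesis
    using X by (intro exists_le_average) (simp_all add: finite_PiE PiE_eq_empty_iff N_def)
qed

definition threshold_test :: "('x \<Rightarrow> 'y \<Rightarrow> real) \<Rightarrow> 'x set \<Rightarrow> real \<Rightarrow> 'x \<Rightarrow> 'y \<Rightarrow> bool" where
  "threshold_test V X \<gamma> x y \<longleftrightarrow> V x y > \<gamma> * ((\<Sum>x'\<in>X. V x' y) / card X)"

lemma false_alarm_threshold_le:
  fixes V :: "'x \<Rightarrow> 'y \<Rightarrow> real"
  assumes "finite X" and V: "\<And>x y. x \<in> X \<Longrightarrow> y \<in> Y \<Longrightarrow> V x y \<ge> 0"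
    and stoch: "\<And>x. x \<in> X \<Longrightarrow> (\<Sum>y\<in>Y. V x y) = 1" and "\<gamma> > 0"
  shows "(\<Sum>x\<in>X. \<Sum>x'\<in>X. \<Sum>y\<in>Y. if threshold_test V X \<gamma> x' y then V x y else 0) \<le> card X ^ 2 / \<gamma>"
proof -
  define N where "N = real (card X)"
  have bound: "(if threshold_test V X \<gamma> x' y then (\<Sum>x\<in>X. V x y) else 0) \<le> N * V x' y / \<gamma>"
    if "x' \<in> X" "y \<in> Y" for x' y
  proof -
    have "N > 0" using that assms by (auto simp: N_def card_gt_0_iff)
    then show ?thesis
      using that V assms by (auto simp: threshold_test_def N_def field_simps)
  qed
  have "(\<Sum>x\<in>X. \<Sum>x'\<in>X. \<Sum>y\<in>Y. if threshold_test V X \<gamma> x' y then V x y else 0) =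
        (\<Sum>x'\<in>X. \<Sum>y\<in>Y. \<Sum>x\<in>X. if threshold_test V X \<gamma> x' y then V x y else 0)"
    by (subst sum.swap) (simp add: sum.swap[of _ X Y])
  also have "\<dots> = (\<Sum>x'\<in>X. \<Sum>y\<in>Y. if threshold_test V X \<gamma> x' y then (\<Sum>x\<in>X. V x y) else 0)"
    by (intro sum.cong refl) simp
  also have "\<dots> \<le> (\<Sum>x'\<in>X. \<Sum>y\<in>Y. N * V x' y / \<gamma>)"
    using bound by (intro sum_mono) auto
  also have "\<dots> = N ^ 2 / \<gamma>"
    using stoch by (simp add: sum_divide_distrib[symmetric] sum_distrib_left[symmetric] N_def power2_eq_square)
  finally show ?thesis by (simp add: N_def)
qed

lemma exists_threshold_code:
  fixes V :: "'x \<Rightarrow> 'y \<Rightarrow> real"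
  assumes X: "finite X" "X \<noteq> {}"
    and V: "\<And>x y. x \<in> X \<Longrightarrow> y \<in> Y \<Longrightarrow> V x y \<ge> 0"
    and stoch: "\<And>x. x \<in> X \<Longrightarrow> (\<Sum>y\<in>Y. V x y) = 1" and "\<gamma> > 0" and "Mp \<ge> 1"
  shows "\<exists>c\<in>{..<Mp} \<rightarrow>\<^sub>E X. code_error V Y Mp c (decode_first Mp (threshold_test V X \<gamma>) c) \<le>
           (\<Sum>x\<in>X. \<Sum>y\<in>Y. if threshold_test V X \<gamma> x y then 0 else V x y) / card X + Mp / \<gamma>"
proof -
  let ?test = "threshold_test V X \<gamma>"
  let ?false_alarm = "\<Sum>x\<in>X. \<Sum>x'\<in>X. \<Sum>y\<in>Y. if ?test x' y then V x y else 0"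
  have "card X > 0" using X by (simp add: card_gt_0_iff)
  then have "real Mp * ?false_alarm / card X ^ 2 \<le> real Mp * (card X ^ 2 / \<gamma>) / card X ^ 2"
    using false_alarm_threshold_le[OF X(1) V stoch \<open>\<gamma> > 0\<close>]
    by (intro divide_right_mono mult_left_mono) auto
  also have "\<dots> = Mp / \<gamma>"
    using \<open>card X > 0\<close> by simp
  finally have "real Mp * ?false_alarm / card X ^ 2 \<le> Mp / \<gamma>" .
  moreover have "\<exists>c\<in>{..<Mp} \<rightarrow>\<^sub>E X. code_error V Y Mp c (decode_first Mp ?test c) \<le>
       (\<Sum>x\<in>X. \<Sum>y\<in>Y. if ?test x y then 0 else V x y) / card X + real Mp * ?false_alarm / card X ^ 2"
    by (rule exists_good_codebook) (use assms in auto)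
  ultimately show ?thesis
    by (auto intro: order_trans[OF _ add_left_mono])
qed

section \<open>Memoryless extension and a Chernoff bound\<close>

definition prod_chan :: "(bool \<Rightarrow> 'y \<Rightarrow> real) \<Rightarrow> nat \<Rightarrow> (nat \<Rightarrow> bool) \<Rightarrow> (nat \<Rightarrow> 'y) \<Rightarrow> real" where
  "prod_chan W n x y = (\<Prod>t<n. W (x t) (y t))"

definition output_prob :: "(bool \<Rightarrow> 'y \<Rightarrow> real) \<Rightarrow> 'y \<Rightarrow> real" where
  "output_prob W y = (W False y + W True y) / 2"

lemma prod_chan_nonneg: "(\<And>u y. W u y \<ge> 0) \<Longrightarrow> prod_chan W n x y \<ge> 0"
  unfolding prod_chan_def by (intro prod_nonneg) auto

lemma sum_prod_chan_inputs:
  "(\<Sum>x\<in>{..<n} \<rightarrow>\<^sub>E UNIV. prod_chan W n x y) = 2 ^ n * (\<Prod>t<n. output_prob W (y t))"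
  unfolding prod_chan_def output_prob_def
  using prod_sum_PiE[of "{..<n}" "\<lambda>_. UNIV" "\<lambda>t u. W u (y t)"]
  by (simp add: UNIV_bool prod_dividef add.commute)

lemma sum_prod_chan_outputs:
  assumes "finite Y" "\<And>u. (\<Sum>y\<in>Y. W u y) = 1"
  shows "(\<Sum>y\<in>{..<n} \<rightarrow>\<^sub>E Y. prod_chan W n x y) = 1"
  unfolding prod_chan_def
  using prod_sum_PiE[of "{..<n}" "\<lambda>_. Y" "\<lambda>t y. W (x t) y"] assms by simp

text \<open>With U uniform and Y the output, this is E[exp (s (a ln 2 - i(U;Y)))] for the information
  density i(u;y) = ln (W u y / output_prob W y): it equals 1 at s = 0 and has derivative
  ln 2 (a - I(U;Y)) there.\<close>
definition info_mgf :: "(bool \<Rightarrow> 'y \<Rightarrow> real) \<Rightarrow> 'y set \<Rightarrow> real \<Rightarrow> real \<Rightarrow> real" where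
  "info_mgf W Y a s =
     (1/2) * (\<Sum>u\<in>UNIV. \<Sum>y\<in>Y. W u y * exp (s * ln (2 powr a * output_prob W y / W u y)))"

lemma info_mgf_nonneg: "(\<And>u y. W u y \<ge> 0) \<Longrightarrow> info_mgf W Y a s \<ge> 0"
  unfolding info_mgf_def by (intro mult_nonneg_nonneg sum_nonneg) auto

lemma info_mgf_lt_1:
  assumes W: "\<And>u y. W u y \<ge> 0" and stoch: "\<And>u. (\<Sum>y\<in>Y. W u y) = 1"
    and a: "a < mutual_info_bin W Y"
  shows "\<exists>s>0. info_mgf W Y a s < 1"
proof -
  define L where "L u y = ln (2 powr a * output_prob W y / W u y)" for u y
  have mgf: "info_mgf W Y a = (\<lambda>s. (1/2) * (\<Sum>u\<in>UNIV. \<Sum>y\<in>Y. W u y * exp (s * L u y)))"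
    by (simp add: info_mgf_def L_def fun_eq_iff)
  have "(1/2) * (W u y * L u y) = (1/2) * a * ln 2 * W u y - ln 2 *
       (if W u y = 0 then 0 else (1/2) * W u y * log 2 (W u y / ((W False y + W True y) / 2)))"
    for u y
  proof (cases "W u y = 0")
    case False
    then have "W u y > 0" "output_prob W y > 0"
      using W[of u y] W[of "\<not> u" y] by (cases u; auto simp: output_prob_def)+
    then have Leq: "L u y = a * ln 2 - ln 2 * log 2 (W u y / output_prob W y)"
      by (simp add: L_def log_def ln_div ln_mult ln_powr)
    from False show ?thesis
      unfolding output_prob_def[symmetric] Leq by (simp add: algebra_simps)
  qed simp
  then have "(1/2) * (\<Sum>u\<in>UNIV. \<Sum>y\<in>Y. W u y * L u y) =
      (1/2) * a * ln 2 * (\<Sum>u\<in>UNIV. \<Sum>y\<in>Y. W u y) - ln 2 * mutual_info_bin W Y"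
    unfolding mutual_info_bin_def by (simp only: sum_distrib_left sum_subtractf)
  also have "\<dots> = ln 2 * (a - mutual_info_bin W Y)"
    by (simp add: stoch UNIV_bool algebra_simps)
  finally have "(1/2) * (\<Sum>u\<in>UNIV. \<Sum>y\<in>Y. W u y * L u y) = ln 2 * (a - mutual_info_bin W Y)" .
  moreover have "((\<lambda>s. (1/2) * (\<Sum>u\<in>UNIV. \<Sum>y\<in>Y. W u y * exp (s * L u y))) has_real_derivative
      (1/2) * (\<Sum>u\<in>UNIV. \<Sum>y\<in>Y. W u y * L u y)) (at 0)"
    by (auto intro!: derivative_eq_intros simp: mult.commute)
  ultimately have "(info_mgf W Y a has_real_derivative ln 2 * (a - mutual_info_bin W Y)) (at 0)"
    unfolding mgf by simp
  moreover have "ln 2 * (a - mutual_info_bin W Y) < 0"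
    using a by (simp add: mult_pos_neg)
  ultimately obtain d where "d > 0" "\<And>h. 0 < h \<Longrightarrow> h < d \<Longrightarrow> info_mgf W Y a (0 + h) < info_mgf W Y a 0"
    using DERIV_neg_dec_right by blast
  moreover have "info_mgf W Y a 0 = 1"
    unfolding mgf by (simp add: stoch UNIV_bool)
  ultimately show ?thesis
    by (intro exI[of _ "d/2"]) auto
qed

text \<open>Chernoff: on the miss event the likelihood ratio c^n Q^n(y) / W^n(y|x) is at least 1, so it
  may be raised to the power s \<ge> 0 and split over the letters.\<close>
lemma prod_chan_le_chernoff:
  assumes W: "\<And>u y. W u y \<ge> 0" and "c > 0" "s \<ge> 0"
    and le: "prod_chan W n x y \<le> c ^ n * (\<Prod>t<n. output_prob W (y t))"
  shows "prod_chan W n x y \<le>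
           (\<Prod>t<n. W (x t) (y t) * exp (s * ln (c * output_prob W (y t) / W (x t) (y t))))"
proof (cases "prod_chan W n x y = 0")
  case True
  then show ?thesis using W by (simp add: prod_nonneg)
next
  case False
  define r where "r t = c * output_prob W (y t) / W (x t) (y t)" for t
  have pos: "W (x t) (y t) > 0" "output_prob W (y t) > 0" if "t < n" for t
  proof -
    have "W (x t) (y t) \<noteq> 0" using False that by (auto simp: prod_chan_def)
    then show "W (x t) (y t) > 0" using W[of "x t" "y t"] by simp
    then show "output_prob W (y t) > 0"
      using W[of "\<not> x t" "y t"] by (cases "x t") (auto simp: output_prob_def)
  qed
  then have r_pos: "r t > 0" if "t < n" for t using that \<open>c > 0\<close> by (simp add: r_def)
  have "prod_chan W n x y > 0" unfolding prod_chan_def using pos by (intro prod_pos) auto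
  moreover have "(\<Prod>t<n. r t) = c ^ n * (\<Prod>t<n. output_prob W (y t)) / prod_chan W n x y"
    by (simp add: r_def prod_chan_def prod_dividef prod.distrib)
  ultimately have "1 \<le> (\<Prod>t<n. r t)" using le by simp
  then have "1 \<le> exp (s * ln (\<Prod>t<n. r t))"
    using \<open>s \<ge> 0\<close> by simp
  also have "\<dots> = (\<Prod>t<n. exp (s * ln (r t)))"
  proof -
    have "ln (\<Prod>t<n. r t) = (\<Sum>t<n. ln (r t))"
      using r_pos by (intro ln_prod) (auto simp: less_imp_neq[symmetric])
    then show ?thesis by (simp add: sum_distrib_left exp_sum)
  qed
  finally have "prod_chan W n x y * 1 \<le> prod_chan W n x y * (\<Prod>t<n. exp (s * ln (r t)))"
    using \<open>prod_chan W n x y > 0\<close> by (intro mult_left_mono) auto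
  then show ?thesis by (simp add: prod_chan_def r_def prod.distrib)
qed

lemma threshold_miss_le:
  assumes "finite Y" and W: "\<And>u y. W u y \<ge> 0" and "s \<ge> 0"
  shows "(\<Sum>x\<in>{..<n} \<rightarrow>\<^sub>E UNIV. \<Sum>y\<in>{..<n} \<rightarrow>\<^sub>E Y.
            if threshold_test (prod_chan W n) ({..<n} \<rightarrow>\<^sub>E UNIV) ((2 powr a) ^ n) x y then 0
            else prod_chan W n x y) \<le> 2 ^ n * info_mgf W Y a s ^ n"
proof -
  define h where "h u y = W u y * exp (s * ln (2 powr a * output_prob W y / W u y))" for u y
  have card_inputs: "card ({..<n} \<rightarrow>\<^sub>E (UNIV :: bool set)) = 2 ^ n"
    by (simp add: card_PiE)
  have "(\<Sum>x\<in>{..<n} \<rightarrow>\<^sub>E UNIV. \<Sum>y\<in>{..<n} \<rightarrow>\<^sub>E Y.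
            if threshold_test (prod_chan W n) ({..<n} \<rightarrow>\<^sub>E UNIV) ((2 powr a) ^ n) x y then 0
            else prod_chan W n x y) \<le> (\<Sum>x\<in>{..<n} \<rightarrow>\<^sub>E UNIV. \<Sum>y\<in>{..<n} \<rightarrow>\<^sub>E Y. \<Prod>t<n. h (x t) (y t))"
  proof (intro sum_mono)
    fix x y
    have "prod_chan W n x y \<le> (\<Prod>t<n. h (x t) (y t))"
      if "prod_chan W n x y \<le> (2 powr a) ^ n * (\<Prod>t<n. output_prob W (y t))"
      unfolding h_def using W \<open>s \<ge> 0\<close> that by (intro prod_chan_le_chernoff) auto
    moreover have "0 \<le> (\<Prod>t<n. h (x t) (y t))"
      unfolding h_def using W by (intro prod_nonneg) auto
    ultimately show "(if threshold_test (prod_chan W n) ({..<n} \<rightarrow>\<^sub>E UNIV) ((2 powr a) ^ n) x y then 0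
            else prod_chan W n x y) \<le> (\<Prod>t<n. h (x t) (y t))"
      by (auto simp: threshold_test_def card_inputs sum_prod_chan_inputs)
  qed
  also have "\<dots> = (\<Sum>x\<in>{..<n} \<rightarrow>\<^sub>E UNIV. \<Prod>t<n. \<Sum>y\<in>Y. h (x t) y)"
  proof (intro sum.cong refl)
    fix x :: "nat \<Rightarrow> bool"
    show "(\<Sum>y\<in>{..<n} \<rightarrow>\<^sub>E Y. \<Prod>t<n. h (x t) (y t)) = (\<Prod>t<n. \<Sum>y\<in>Y. h (x t) y)"
      using prod_sum_PiE[of "{..<n}" "\<lambda>_. Y" "\<lambda>t y. h (x t) y"] \<open>finite Y\<close> by simp
  qed
  also have "\<dots> = (\<Prod>t<n. \<Sum>u\<in>UNIV. \<Sum>y\<in>Y. h u y)"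
    using prod_sum_PiE[of "{..<n}" "\<lambda>_. UNIV" "\<lambda>t u. \<Sum>y\<in>Y. h u y"] by simp
  also have "\<dots> = 2 ^ n * info_mgf W Y a s ^ n"
    by (simp add: info_mgf_def h_def power_mult_distrib[symmetric])
  finally show ?thesis .
qed

section \<open>Coding theorem for binary-input channels\<close>

lemma exists_code_error_le:
  assumes "finite Y" and W: "\<And>u y. W u y \<ge> 0" and stoch: "\<And>u. (\<Sum>y\<in>Y. W u y) = 1"
    and "s \<ge> 0" "Mp \<ge> 1"
  shows "\<exists>enc dec. code_error (prod_chan W n) ({..<n} \<rightarrow>\<^sub>E Y) Mp enc dec \<le>
           info_mgf W Y a s ^ n + Mp / (2 powr a) ^ n"
proof -
  let ?X = "{..<n} \<rightarrow>\<^sub>E (UNIV :: bool set)" and ?Y = "{..<n} \<rightarrow>\<^sub>E Y"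
  let ?test = "threshold_test (prod_chan W n) ?X ((2 powr a) ^ n)"
  have card_X: "card ?X = 2 ^ n" by (simp add: card_PiE)
  obtain c where "code_error (prod_chan W n) ?Y Mp c (decode_first Mp ?test c) \<le>
      (\<Sum>x\<in>?X. \<Sum>y\<in>?Y. if ?test x y then 0 else prod_chan W n x y) / card ?X + Mp / (2 powr a) ^ n"
    using exists_threshold_code[where X = ?X and Y = ?Y and V = "prod_chan W n" and \<gamma> = "(2 powr a) ^ n" and Mp = Mp] assms
    by (auto simp: finite_PiE PiE_eq_empty_iff prod_chan_nonneg sum_prod_chan_outputs)
  moreover have "(\<Sum>x\<in>?X. \<Sum>y\<in>?Y. if ?test x y then 0 else prod_chan W n x y) / card ?X \<le>
                 info_mgf W Y a s ^ n"
    using threshold_miss_le[OF \<open>finite Y\<close> W \<open>s \<ge> 0\<close>, where n = n and a = a] unfolding card_X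
    by (simp add: divide_le_eq mult.commute)
  ultimately have "code_error (prod_chan W n) ?Y Mp c (decode_first Mp ?test c) \<le>
                   info_mgf W Y a s ^ n + Mp / (2 powr a) ^ n"
    by linarith
  then show ?thesis by blast
qed

lemma exists_code_of_rate:
  fixes R :: real and n :: nat
  assumes "finite Y" and W: "\<And>u y. W u y \<ge> 0" and stoch: "\<And>u. (\<Sum>y\<in>Y. W u y) = 1"
    and "s \<ge> 0"
  defines "Mp \<equiv> nat \<lceil>(2 powr R) ^ n\<rceil>"
  shows "Mp \<ge> 1 \<and> real n * R \<le> log 2 (real Mp) \<and>
         (\<exists>enc dec. code_error (prod_chan W n) ({..<n} \<rightarrow>\<^sub>E Y) Mp enc dec \<le>
            info_mgf W Y a s ^ n + (2 powr R / 2 powr a) ^ n + (1 / 2 powr a) ^ n)"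
proof -
  have Mp: "(2 powr R) ^ n \<le> real Mp" "real Mp \<le> (2 powr R) ^ n + 1"
    unfolding Mp_def by (simp_all add: real_nat_ceiling_ge)
  moreover have "(2 powr R) ^ n > 0" by simp
  ultimately have "Mp \<ge> 1" by linarith
  obtain enc dec where "code_error (prod_chan W n) ({..<n} \<rightarrow>\<^sub>E Y) Mp enc dec \<le>
                        info_mgf W Y a s ^ n + Mp / (2 powr a) ^ n"
    using exists_code_error_le[where W = W and Y = Y and s = s and Mp = Mp and n = n and a = a]
      assms \<open>Mp \<ge> 1\<close> by blast
  also have "Mp / (2 powr a) ^ n \<le> ((2 powr R) ^ n + 1) / (2 powr a) ^ n"
    using Mp by (intro divide_right_mono) auto
  finally have "code_error (prod_chan W n) ({..<n} \<rightarrow>\<^sub>E Y) Mp enc dec \<le>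
                info_mgf W Y a s ^ n + (2 powr R / 2 powr a) ^ n + (1 / 2 powr a) ^ n"
    by (simp add: power_divide add_divide_distrib add.assoc)
  moreover have "real n * R \<le> log 2 (real Mp)"
  proof -
    have "real n * R = log 2 ((2 powr R) ^ n)"
      by (simp add: log_nat_power)
    also have "\<dots> \<le> log 2 (real Mp)"
      using Mp(1) \<open>Mp \<ge> 1\<close> by (subst log_le_cancel_iff) auto
    finally show ?thesis .
  qed
  ultimately show ?thesis using \<open>Mp \<ge> 1\<close> by blast
qed

theorem binary_channel_coding:
  assumes "finite Y" and W: "\<And>u y. W u y \<ge> 0" and stoch: "\<And>u. (\<Sum>y\<in>Y. W u y) = 1"
    and R: "R < mutual_info_bin W Y" and "\<epsilon> > 0"
  shows "\<exists>n\<ge>N. \<exists>Mp enc dec. n > 0 \<and> Mp \<ge> 1 \<and> log 2 (real Mp) / real n \<ge> R \<and>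
           code_error (prod_chan W n) ({..<n} \<rightarrow>\<^sub>E Y) Mp enc dec \<le> \<epsilon>"
proof (cases "R \<le> 0")
  case True
  define n where "n = max N 1"
  have "code_error (prod_chan W n) ({..<n} \<rightarrow>\<^sub>E Y) 1 (\<lambda>_ _. False) (\<lambda>_. 0) = 0"
    by (simp add: code_error_def)
  then have "n \<ge> N \<and> n > 0 \<and> (1::nat) \<ge> 1 \<and> log 2 (real (1::nat)) / real n \<ge> R \<and>
      code_error (prod_chan W n) ({..<n} \<rightarrow>\<^sub>E Y) 1 (\<lambda>_ _. False) (\<lambda>_. 0) \<le> \<epsilon>"
    using True \<open>\<epsilon> > 0\<close> by (simp add: n_def)
  then show ?thesis by blast
next
  case False
  define a where "a = (R + mutual_info_bin W Y) / 2"
  have "0 < R" "R < a" "a < mutual_info_bin W Y" using False R by (simp_all add: a_def)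
  obtain s where "s > 0" and g: "info_mgf W Y a s < 1"
    using info_mgf_lt_1[OF W stoch \<open>a < mutual_info_bin W Y\<close>] by blast
  have "(\<lambda>n. info_mgf W Y a s ^ n + (2 powr R / 2 powr a) ^ n + (1 / 2 powr a) ^ n) \<longlonglongrightarrow> 0 + 0 + 0"
    using g info_mgf_nonneg[of W, OF W] \<open>0 < R\<close> \<open>R < a\<close>
    by (intro tendsto_add LIMSEQ_power_zero) auto
  then have "eventually (\<lambda>n. info_mgf W Y a s ^ n + (2 powr R / 2 powr a) ^ n + (1 / 2 powr a) ^ n < \<epsilon>)
               sequentially"
    using \<open>\<epsilon> > 0\<close> by (auto dest: order_tendstoD(2))
  then obtain N0 where N0: "\<And>n. n \<ge> N0 \<Longrightarrow>
      info_mgf W Y a s ^ n + (2 powr R / 2 powr a) ^ n + (1 / 2 powr a) ^ n < \<epsilon>"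
    unfolding eventually_sequentially by blast
  define n where "n = max (max N N0) 1"
  have n: "n \<ge> N" "n > 0" "n \<ge> N0" by (simp_all add: n_def)
  define Mp where "Mp = nat \<lceil>(2 powr R) ^ n\<rceil>"
  obtain enc dec where "Mp \<ge> 1" and rate: "real n * R \<le> log 2 (real Mp)"
    and "code_error (prod_chan W n) ({..<n} \<rightarrow>\<^sub>E Y) Mp enc dec \<le>
           info_mgf W Y a s ^ n + (2 powr R / 2 powr a) ^ n + (1 / 2 powr a) ^ n"
    using exists_code_of_rate[where W = W and Y = Y and s = s and R = R and n = n and a = a]
      assms \<open>s > 0\<close> unfolding Mp_def by auto
  moreover from rate n have "log 2 (real Mp) / real n \<ge> R"
    by (simp add: le_divide_eq mult.commute)
  ultimately have "n \<ge> N \<and> n > 0 \<and> Mp \<ge> 1 \<and> log 2 (real Mp) / real n \<ge> R \<and>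
      code_error (prod_chan W n) ({..<n} \<rightarrow>\<^sub>E Y) Mp enc dec \<le> \<epsilon>"
    using n N0[OF n(3)] by simp
  then show ?thesis by blast
qed

section \<open>The BSPR network\<close>

lemma avg_err_eq_code_error:
  "avg_err K p n Mp enc dec = code_error (prod_chan (chan K p) n) ({..<n} \<rightarrow>\<^sub>E outs K) Mp enc dec"
  unfolding avg_err_def code_error_def chan_n_def prod_chan_def outs_n_def ..

lemma achievable_fwd_below_mutual_info:
  assumes p: "\<forall>i\<in>{1..K}. 0 \<le> p i \<and> p i \<le> 1" and R: "R < mutual_info_unif K p"
  shows "achievable_fwd K p R"
  unfolding achievable_fwd_def avg_err_eq_code_error
proof (intro allI impI)
  fix \<epsilon> :: real and N :: nat
  assume "\<epsilon> > 0"
  then show "\<exists>n\<ge>N. \<exists>Mp enc dec. n > 0 \<and> Mp \<ge> 1 \<and> log 2 (real Mp) / real n \<ge> R \<and>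
               code_error (prod_chan (chan K p) n) ({..<n} \<rightarrow>\<^sub>E outs K) Mp enc dec \<le> \<epsilon>"
    using R chan_nonneg[OF p] by (intro binary_channel_coding)
      (simp_all add: finite_outs sum_chan_outs mutual_info_unif_eq)
qed

lemma eff_p_bounds:
  assumes "0 \<le> ps i" "ps i \<le> 1/2" "0 \<le> pd i" "pd i \<le> 1/2"
  shows "0 \<le> eff_p ps pd i \<and> eff_p ps pd i \<le> 1/2"
proof -
  have "eff_p ps pd i = 1/2 - 2 * ((1/2 - ps i) * (1/2 - pd i))"
    by (simp add: eff_p_def algebra_simps)
  moreover have "0 \<le> (1/2 - ps i) * (1/2 - pd i)"
    using assms by simp
  moreover have "(1/2 - ps i) * (1/2 - pd i) \<le> 1/2 * (1/2)"
    using assms by (intro mult_mono) auto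
  ultimately show ?thesis by linarith
qed

lemma mutual_info_unif_ge:
  assumes p: "\<forall>i\<in>{1..K}. 0 \<le> p i \<and> p i \<le> 1/2"
    and M: "M \<subseteq> {1..K}" "card M = Suc n"
    and pm: "\<forall>i\<in>M. p i \<le> pm" "pm \<le> 1/2"
  shows "mutual_info_unif K p \<ge>
     1 + real (Suc n) * xlogx pm + real (Suc n) * xlogx (1 - pm)
       - (\<Sum>l=0..n. real (n choose l) *
                 xlogx ((1 - pm) ^ l * pm ^ (Suc n - l) + (1 - pm) ^ (Suc n - l) * pm ^ l))"
proof -
  have "M \<noteq> {}" using M(2) by auto
  then obtain i where "i \<in> M" by blast
  then have "0 \<le> pm" using M(1) pm p by force
  then show ?thesis
    using M pm p mutual_info_chan_restricted[OF M, of pm]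
      mutual_info_chan_antimono[of K p "\<lambda>i. if i \<in> M then pm else 1/2"]
    by (auto simp: mutual_info_unif_eq)
qed

theorem corollary2:
  fixes K :: nat and ps pd :: "nat \<Rightarrow> real" and \<M> :: "nat set"
  assumes ps_range: "\<forall>i\<in>{1..K}. 0 \<le> ps i \<and> ps i \<le> 1/2"
      and pd_range: "\<forall>i\<in>{1..K}. 0 \<le> pd i \<and> pd i \<le> 1/2"
      and M_sub: "\<M> \<subseteq> {1..K}" and M_ne: "\<M> \<noteq> {}"
  shows "let p = eff_p ps pd; M = card \<M>;
             pmax = Max (p ` \<M>); qmax = 1 - pmax;
             Rcf = mutual_info_unif K p
         in (\<forall>R. R < Rcf \<longrightarrow> achievable_fwd K p R) \<and>
            Rcf \<ge> 1 + real M * xlogx pmax + real M * xlogx qmax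
              - (\<Sum>l=0..M-1. real ((M-1) choose l) *
                   xlogx (qmax ^ l * pmax ^ (M-l) + qmax ^ (M-l) * pmax ^ l))"
proof -
  define p where "p = eff_p ps pd"
  define pmax where "pmax = Max (p ` \<M>)"
  have p: "\<forall>i\<in>{1..K}. 0 \<le> p i \<and> p i \<le> 1/2"
    using ps_range pd_range eff_p_bounds unfolding p_def by blast
  have fin: "finite \<M>" using M_sub finite_subset by blast
  then obtain n where n: "card \<M> = Suc n" using M_ne by (metis card_0_eq not0_implies_Suc)
  have "pmax \<in> p ` \<M>" "\<forall>i\<in>\<M>. p i \<le> pmax"
    using fin M_ne by (simp_all add: pmax_def)
  then have "pmax \<le> 1/2" "\<forall>i\<in>\<M>. p i \<le> pmax"
    using p M_sub by auto
  then have "mutual_info_unif K p \<ge> 1 + real (Suc n) * xlogx pmax + real (Suc n) * xlogx (1 - pmax)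
       - (\<Sum>l=0..n. real (n choose l) *
             xlogx ((1 - pmax) ^ l * pmax ^ (Suc n - l) + (1 - pmax) ^ (Suc n - l) * pmax ^ l))"
    using p by (intro mutual_info_unif_ge[OF _ M_sub n]) auto
  moreover have "\<forall>R. R < mutual_info_unif K p \<longrightarrow> achievable_fwd K p R"
  proof -
    have "\<forall>i\<in>{1..K}. 0 \<le> p i \<and> p i \<le> 1" using p by auto
    then show ?thesis using achievable_fwd_below_mutual_info by blast
  qed
  ultimately show ?thesis
    by (simp add: Let_def p_def[symmetric] pmax_def[symmetric] n)
qed

end
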